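(* Consider the pursuit-evasion problem described in the context, with a fixed final time $T>0$. For every state $\mathbf{x}=(x,y)$ with $\|\mathbf{x}\|>1$ such that $x\le 0$ or $y\ge 1$, the Evader's optimal trajectory starting at $\mathbf{x}$ avoids the constraint, i.e. it never reaches the Proximity Circle $\|\mathbf{x}\|=1$.
   Context: Pursuer-fixed frame: the Evader's relative position $\mathbf{x}(t)=(x(t),y(t))\in\mathbb{R}^2$ evolves as $\dot x=\mu\cos\psi(t)-1$, $\dot y=\mu\sin\psi(t)$, $\mathbf{x}(0)=\mathbf{x}_0$, where $\mu\in(0,1)$ is the Evader/Pursuer speed ratio and the Evader chooses its heading $\psi(t)$. The Proximity Circle is the unit circle $\|\mathbf{x}\|=1$; the capture-avoidance constraint is $\|\mathbf{x}(t)\|\ge 1$ for all $t\in[0,T]$. For a fixed final time $T$, the Evader wishes to maximize $\|\mathbf{x}(T)\|^2$ subject to this constraint. Throughout the paper it is assumed (by symmetry about the $x$-axis) that $y\ge 0$. *)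

theory Defs
  imports "HOL-Analysis.Analysis"
begin

text \<open>Pursuer-fixed frame. The trajectory is the (absolutely continuous) solution of
  xdot = mu cos psi - 1, ydot = mu sin psi, x(0) = x0, written in integral form.\<close>

definition velocity :: "real \<Rightarrow> (real \<Rightarrow> real) \<Rightarrow> real \<Rightarrow> real \<times> real" where
  "velocity mu psi s = (mu * cos (psi s) - 1, mu * sin (psi s))"

definition traj :: "real \<Rightarrow> real \<times> real \<Rightarrow> (real \<Rightarrow> real) \<Rightarrow> real \<Rightarrow> real \<times> real" where
  "traj mu x0 psi t = x0 + integral {0..t} (velocity mu psi)"

definition feasible :: "real \<Rightarrow> real \<times> real \<Rightarrow> real \<Rightarrow> (real \<Rightarrow> real) \<Rightarrow> bool" where
  "feasible mu x0 T psi \<longleftrightarrow>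
     psi measurable_on {0..T} \<and> (\<forall>t\<in>{0..T}. norm (traj mu x0 psi t) \<ge> 1)"

definition optimal :: "real \<Rightarrow> real \<times> real \<Rightarrow> real \<Rightarrow> (real \<Rightarrow> real) \<Rightarrow> bool" where
  "optimal mu x0 T psi \<longleftrightarrow> feasible mu x0 T psi \<and>
     (\<forall>phi. feasible mu x0 T phi \<longrightarrow> (norm (traj mu x0 phi T))^2 \<le> (norm (traj mu x0 psi T))^2)"

end

theory Submission
  imports Defs
begin

text \<open>Measured from the Pursuer's position at time T, the Evader's endpoint is
  x0 - (T, 0) + mu W, where W is the integral of the unit heading over [0, T], so norm W \<le> T.
  Hence norm x(T) \<le> norm (x0 - (T, 0)) + mu T, and equality forces, by rigidity of the
  triangle inequality, every partial integral of the heading to point along x0 - (T, 0): the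
  only maximiser without the constraint is the straight dash in that direction. If x0 \<le> 0 or
  y0 \<ge> 1, this dash moves away from the unit circle, so it is feasible; it is therefore the
  optimal trajectory of the constrained problem, and it stays strictly outside the circle.\<close>

lemma inner_ge_if_norm_add_ge:
  fixes u w :: "'a::real_inner"
  assumes "norm u = 1" "0 < n" "norm w \<le> r" "n + r \<le> norm (n *\<^sub>R u + w)"
  shows "r \<le> inner u w"
proof -
  have "0 \<le> r" using assms(3) norm_ge_zero order_trans by blast
  then have "(n + r)\<^sup>2 \<le> (norm (n *\<^sub>R u + w))\<^sup>2"
    using assms(2,4) by (intro power_mono) auto
  also have "\<dots> = n\<^sup>2 + 2 * n * inner u w + (norm w)\<^sup>2"
    using dot_norm[of "n *\<^sub>R u" w] assms(1,2) by simp
  also have "\<dots> \<le> n\<^sup>2 + 2 * n * inner u w + r\<^sup>2"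
    using assms(3) by (simp add: power_mono)
  finally have "n * r \<le> n * inner u w"
    by (simp add: power2_eq_square algebra_simps)
  then show ?thesis using assms(2) by simp
qed

lemma eq_scaleR_if_inner_add_ge:
  fixes u a b :: "'a::real_inner"
  assumes "norm u = 1" "norm a \<le> t" "norm b \<le> s - t" "s \<le> inner u (a + b)"
  shows "a = t *\<^sub>R u"
proof -
  have "inner u a \<le> norm a" "inner u b \<le> norm b"
    using norm_cauchy_schwarz[of u a] norm_cauchy_schwarz[of u b] assms(1) by auto
  then have "t \<le> inner u a" using assms(2-4) by (simp add: inner_add_right)
  moreover have "0 \<le> t" using assms(2) norm_ge_zero order_trans by blast
  ultimately have "t * t \<le> t * inner u a" "norm a * norm a \<le> t * t"
    using assms(2) by (simp_all add: mult_left_mono mult_mono')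
  then have "(norm a)\<^sup>2 - 2 * t * inner u a + t\<^sup>2 \<le> 0"
    by (simp add: power2_eq_square)
  moreover have "(norm (a - t *\<^sub>R u))\<^sup>2 = (norm a)\<^sup>2 - 2 * t * inner u a + t\<^sup>2"
    using dot_norm_neg[of a "t *\<^sub>R u"] assms(1) by (simp add: inner_commute power_mult_distrib)
  ultimately have "(norm (a - t *\<^sub>R u))\<^sup>2 \<le> 0" by linarith
  then show ?thesis by simp
qed

definition heading :: "(real \<Rightarrow> real) \<Rightarrow> real \<Rightarrow> real \<times> real" where
  "heading psi s = (cos (psi s), sin (psi s))"

lemma norm_heading [simp]: "norm (heading psi s) = 1"
  by (simp add: heading_def norm_Pair)

lemma heading_integrable_on:
  assumes "psi measurable_on {a..b}"
  shows "heading psi integrable_on {a..b}"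
proof -
  have "psi \<in> borel_measurable (lebesgue_on {a..b})"
    using assms by (simp add: measurable_on_iff_borel_measurable)
  then have "heading psi \<in> borel_measurable (lebesgue_on {a..b})"
    unfolding heading_def by measurable
  then show ?thesis
    by (rule measurable_bounded_by_integrable_imp_integrable[OF _ integrable_const_ivl[of 1]]) auto
qed

lemma norm_integral_heading_le:
  assumes "psi measurable_on {0..T}" "0 \<le> a" "a \<le> b" "b \<le> T"
  shows "norm (integral {a..b} (heading psi)) \<le> b - a"
proof -
  have "heading psi integrable_on {a..b}"
    using heading_integrable_on[OF assms(1)] integrable_on_subinterval assms by fastforce
  then have "norm (integral {a..b} (heading psi)) \<le> integral {a..b} (\<lambda>_. 1::real)"
    by (rule integral_norm_bound_integral[OF _ integrable_const_ivl]) auto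
  then show ?thesis using assms by simp
qed

lemma traj_eq_integral_heading:
  assumes "psi measurable_on {0..T}" "0 \<le> t" "t \<le> T"
  shows "traj mu x0 psi t = x0 + mu *\<^sub>R integral {0..t} (heading psi) - (t, 0)"
proof -
  have "heading psi integrable_on {0..t}"
    using heading_integrable_on[OF assms(1)] integrable_on_subinterval assms by fastforce
  then have "integral {0..t} (\<lambda>s. mu *\<^sub>R heading psi s - (1, 0))
      = mu *\<^sub>R integral {0..t} (heading psi) - integral {0..t} (\<lambda>_. (1, 0))"
    by (simp add: integral_diff integrable_cmul integrable_const_ivl)
  moreover have "velocity mu psi = (\<lambda>s. mu *\<^sub>R heading psi s - (1, 0))"
    by (simp add: velocity_def heading_def fun_eq_iff)
  ultimately show ?thesis
    using assms by (simp add: traj_def)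
qed

lemma unit_vector_cos_sin:
  fixes u :: "real \<times> real"
  assumes "norm u = 1"
  obtains th where "(cos th, sin th) = u"
proof -
  have "(fst u)\<^sup>2 + (snd u)\<^sup>2 = 1"
    using assms by (simp add: norm_prod_def)
  then show ?thesis
    using sincos_total_2pi that by (metis prod.collapse)
qed

lemma traj_const_heading:
  assumes "0 \<le> t"
  shows "traj mu x0 (\<lambda>_. th) t = x0 + t *\<^sub>R (mu *\<^sub>R (cos th, sin th) - (1, 0))"
proof -
  have "velocity mu (\<lambda>_. th) = (\<lambda>_. mu *\<^sub>R (cos th, sin th) - (1, 0))"
    by (simp add: velocity_def fun_eq_iff)
  then show ?thesis
    using assms by (simp add: traj_def)
qed

text \<open>In the ground frame the heading x0 - (T, 0) points directly away from where the
  Pursuer will be at time T.\<close>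
definition straight_traj :: "real \<Rightarrow> real \<times> real \<Rightarrow> real \<Rightarrow> real \<Rightarrow> real \<times> real" where
  "straight_traj mu x0 T t = x0 + t *\<^sub>R (mu *\<^sub>R sgn (x0 - (T, 0)) - (1, 0))"

lemma norm_straight_traj_endpoint:
  assumes "0 \<le> mu" "0 \<le> T" "x0 \<noteq> (T, 0)"
  shows "norm (straight_traj mu x0 T T) = norm (x0 - (T, 0)) + mu * T"
proof -
  let ?c = "x0 - (T, 0)"
  have "straight_traj mu x0 T T = (norm ?c + mu * T) *\<^sub>R sgn ?c"
    using assms(3) by (simp add: straight_traj_def sgn_div_norm scaleR_add_left algebra_simps)
  then show ?thesis using assms by (simp add: norm_sgn)
qed

lemma norm_traj_endpoint_le:
  assumes "0 \<le> mu" "0 \<le> T" "psi measurable_on {0..T}"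
  shows "norm (traj mu x0 psi T) \<le> norm (x0 - (T, 0)) + mu * T"
proof -
  let ?W = "integral {0..T} (heading psi)"
  have "norm (mu *\<^sub>R ?W) \<le> mu * T"
    using norm_integral_heading_le[OF assms(3), of 0 T] assms(1,2) by (simp add: mult_left_mono)
  moreover have "traj mu x0 psi T = (x0 - (T, 0)) + mu *\<^sub>R ?W"
    using traj_eq_integral_heading[OF assms(3), of T] assms(2) by simp
  ultimately show ?thesis
    by (simp add: norm_triangle_mono)
qed

lemma traj_eq_straight_traj_if_endpoint_extremal:
  assumes "0 < mu" "x0 \<noteq> (T, 0)" "psi measurable_on {0..T}"
    and "norm (x0 - (T, 0)) + mu * T \<le> norm (traj mu x0 psi T)"
    and "0 \<le> t" "t \<le> T"
  shows "traj mu x0 psi t = straight_traj mu x0 T t"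
proof -
  define c where "c = x0 - (T, 0)"
  define A where "A = integral {0..t} (heading psi)"
  define B where "B = integral {t..T} (heading psi)"
  have u: "norm (sgn c) = 1" "c = norm c *\<^sub>R sgn c"
    using assms(2) by (simp_all add: c_def norm_sgn sgn_div_norm)
  have AB: "A + B = integral {0..T} (heading psi)"
    unfolding A_def B_def
    by (rule Henstock_Kurzweil_Integration.integral_combine[OF assms(5,6)
          heading_integrable_on[OF assms(3)]])
  have "norm (mu *\<^sub>R (A + B)) \<le> mu * T"
    using norm_integral_heading_le[OF assms(3), of 0 T] assms(1,5,6) AB
    by (simp add: mult_left_mono)
  moreover have "traj mu x0 psi T = norm c *\<^sub>R sgn c + mu *\<^sub>R (A + B)"
    using traj_eq_integral_heading[OF assms(3), of T] assms(5,6) u(2) AB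
    by (simp add: c_def)
  moreover have "norm c + mu * T \<le> norm (traj mu x0 psi T)" "0 < norm c"
    using assms(2,4) by (simp_all add: c_def)
  ultimately have "mu * T \<le> inner (sgn c) (mu *\<^sub>R (A + B))"
    using inner_ge_if_norm_add_ge[OF u(1)] by metis
  then have "T \<le> inner (sgn c) (A + B)"
    using assms(1) by simp
  moreover have "norm A \<le> t" "norm B \<le> T - t"
    using norm_integral_heading_le[OF assms(3), of 0 t] norm_integral_heading_le[OF assms(3), of t T]
      assms(5,6) by (simp_all add: A_def B_def)
  ultimately have "A = t *\<^sub>R sgn c"
    using eq_scaleR_if_inner_add_ge[OF u(1)] by blast
  then show ?thesis
    using traj_eq_integral_heading[OF assms(3,5,6)]
    by (simp add: A_def c_def straight_traj_def algebra_simps)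
qed

text \<open>If y0 \<ge> 1 the y-coordinate increases along the dash; if x0 \<le> 0 its velocity has
  nonnegative inner product with x0, so the distance to the origin does not decrease.\<close>
lemma one_less_norm_straight_traj:
  assumes "0 < mu" "0 < T" "0 \<le> t" "1 < norm x0" "fst x0 \<le> 0 \<or> 1 \<le> snd x0"
  shows "1 < norm (straight_traj mu x0 T t)"
proof -
  obtain a b where x0: "x0 = (a, b)" by fastforce
  define n where "n = norm (x0 - (T, 0))"
  define v where "v = mu *\<^sub>R sgn (x0 - (T, 0)) - (1, 0)"
  have "x0 \<noteq> (T, 0)" using assms(2,5) by auto
  then have "0 < n" by (simp add: n_def)
  have v: "v = (mu * (a - T) / n - 1, mu * b / n)"
    by (simp add: v_def n_def x0 sgn_div_norm divide_inverse)
  have z: "straight_traj mu x0 T t = x0 + t *\<^sub>R v"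
    by (simp add: straight_traj_def v_def)
  consider "1 \<le> b" "0 < t" | "t = 0" | "a \<le> 0"
    using assms(3,5) x0 by fastforce
  then show ?thesis
  proof cases
    case 1
    moreover have "0 < t * (mu * b / n)"
      using 1 assms(1) \<open>0 < n\<close> by simp
    ultimately have "1 < b + t * (mu * b / n)"
      by linarith
    also have "\<dots> = snd (x0 + t *\<^sub>R v)"
      by (simp add: x0 v)
    also have "\<dots> \<le> norm (x0 + t *\<^sub>R v)"
      by (metis abs_ge_self norm_snd_le order_trans prod.collapse real_norm_def)
    finally show ?thesis by (simp add: z)
  next
    case 2
    then show ?thesis using assms(4) by (simp add: straight_traj_def)
  next
    case 3
    have "0 \<le> a * (a - T) + b\<^sup>2"
      using 3 assms(2) by (simp add: mult_nonpos_nonpos)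
    then have "0 \<le> mu * (a * (a - T) + b\<^sup>2) / n"
      using assms(1) \<open>0 < n\<close> by simp
    then have "0 \<le> mu * (a * (a - T) + b\<^sup>2) / n - a"
      using 3 by linarith
    also have "\<dots> = inner x0 v"
      using \<open>0 < n\<close> by (simp add: x0 v field_simps power2_eq_square)
    finally have "0 \<le> inner x0 v" .
    then have "0 \<le> inner x0 (t *\<^sub>R v)"
      using assms(3) by simp
    then have "(norm x0)\<^sup>2 \<le> (norm (x0 + t *\<^sub>R v))\<^sup>2"
      using dot_norm[of x0 "t *\<^sub>R v"] zero_le_power2[of "norm (t *\<^sub>R v)"] by argo
    then have "norm x0 \<le> norm (x0 + t *\<^sub>R v)"
      by (rule power2_le_imp_le) simp
    then show ?thesis using assms(4) by (simp add: z)
  qed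
qed

lemma traj_const_heading_eq_straight_traj:
  assumes "x0 \<noteq> (T, 0)"
  obtains th where "\<And>t. 0 \<le> t \<Longrightarrow> traj mu x0 (\<lambda>_. th) t = straight_traj mu x0 T t"
proof -
  have "norm (sgn (x0 - (T, 0))) = 1"
    using assms by (simp add: norm_sgn)
  then obtain th where th: "(cos th, sin th) = sgn (x0 - (T, 0))"
    by (rule unit_vector_cos_sin)
  have "traj mu x0 (\<lambda>_. th) t = straight_traj mu x0 T t" if "0 \<le> t" for t
    unfolding traj_const_heading[OF that] straight_traj_def th ..
  then show ?thesis
    by (rule that)
qed

lemma optimal_iff_traj_eq_straight_traj:
  assumes "0 < mu" "0 \<le> T" "x0 \<noteq> (T, 0)"
    and straight_feasible: "\<forall>t\<in>{0..T}. 1 \<le> norm (straight_traj mu x0 T t)"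
  shows "optimal mu x0 T psi \<longleftrightarrow>
    psi measurable_on {0..T} \<and> (\<forall>t\<in>{0..T}. traj mu x0 psi t = straight_traj mu x0 T t)"
    (is "_ \<longleftrightarrow> ?straight psi")
proof -
  have feasible: "feasible mu x0 T phi" if "?straight phi" for phi
    using that straight_feasible by (simp add: feasible_def)
  have endpoint: "norm (traj mu x0 phi T) = norm (x0 - (T, 0)) + mu * T" if "?straight phi" for phi
    using that norm_straight_traj_endpoint[OF _ assms(2,3)] assms(1,2) by simp
  obtain th where "\<And>t. 0 \<le> t \<Longrightarrow> traj mu x0 (\<lambda>_. th) t = straight_traj mu x0 T t"
    using traj_const_heading_eq_straight_traj[OF assms(3)] by blast
  then have straight_th: "?straight (\<lambda>_. th)"
    by simp
  show ?thesis
  proof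
    assume optimal: "optimal mu x0 T psi"
    then have measurable: "psi measurable_on {0..T}"
      by (simp add: optimal_def feasible_def)
    have "(norm (traj mu x0 (\<lambda>_. th) T))\<^sup>2 \<le> (norm (traj mu x0 psi T))\<^sup>2"
      using optimal feasible[OF straight_th] unfolding optimal_def by blast
    then have "norm (x0 - (T, 0)) + mu * T \<le> norm (traj mu x0 psi T)"
      unfolding endpoint[OF straight_th, symmetric] by (rule power2_le_imp_le) simp
    then have "traj mu x0 psi t = straight_traj mu x0 T t" if "t \<in> {0..T}" for t
      using that by (intro traj_eq_straight_traj_if_endpoint_extremal[OF assms(1,3) measurable]) auto
    then show "?straight psi"
      using measurable by blast
  next
    assume straight: "?straight psi"
    have "(norm (traj mu x0 phi T))\<^sup>2 \<le> (norm (traj mu x0 psi T))\<^sup>2"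
      if "feasible mu x0 T phi" for phi
      using that norm_traj_endpoint_le[of mu T phi x0] assms(1,2)
      by (simp add: feasible_def endpoint[OF straight] power_mono)
    then show "optimal mu x0 T psi"
      using feasible[OF straight] by (simp add: optimal_def)
  qed
qed

theorem lemma1:
  fixes mu T :: real and x0 :: "real \<times> real"
  assumes "0 < mu" "mu < 1" "0 < T"
    and "norm x0 > 1"
    and "fst x0 \<le> 0 \<or> snd x0 \<ge> 1"
  shows "(\<exists>psi. optimal mu x0 T psi) \<and>
         (\<forall>psi. optimal mu x0 T psi \<longrightarrow> (\<forall>t\<in>{0..T}. norm (traj mu x0 psi t) > 1))"
proof -
  have x0: "x0 \<noteq> (T, 0)"
    using assms(3,5) by auto
  have outside: "1 < norm (straight_traj mu x0 T t)" if "0 \<le> t" for t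
    using one_less_norm_straight_traj[OF assms(1,3) that assms(4,5)] .
  then have optimal_iff: "optimal mu x0 T psi \<longleftrightarrow>
      psi measurable_on {0..T} \<and> (\<forall>t\<in>{0..T}. traj mu x0 psi t = straight_traj mu x0 T t)" for psi
    using optimal_iff_traj_eq_straight_traj[OF assms(1) _ x0] assms(3) by (simp add: less_imp_le)
  obtain th where "\<And>t. 0 \<le> t \<Longrightarrow> traj mu x0 (\<lambda>_. th) t = straight_traj mu x0 T t"
    using traj_const_heading_eq_straight_traj[OF x0] by blast
  then have "optimal mu x0 T (\<lambda>_. th)"
    by (simp add: optimal_iff)
  moreover have "\<forall>psi. optimal mu x0 T psi \<longrightarrow> (\<forall>t\<in>{0..T}. norm (traj mu x0 psi t) > 1)"
    using outside by (simp add: optimal_iff)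
  ultimately show ?thesis
    by blast
qed

end
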